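(* Assume the Diagonal Conjecture (DC) holds: for every $r \ge 2$, all integers $3 \le s \le t$ and all integers $k_3,\dots,k_r \ge 2$, we have $R(s,t,k_3,\dots,k_r) \ge R(s-1,t+1,k_3,\dots,k_r)$. If $\lim_{r\to\infty} R_r(3)^{1/r}$ is finite, then $\lim_{r\to\infty} R_r(k)^{1/r}$ is finite for every integer $k \ge 3$.
   Context: $R(k_1,\dots,k_r)$ denotes the multicolor Ramsey number: the least $n$ such that every coloring of the edges of $K_n$ with $r$ colors contains, for some $i$, a complete subgraph $K_{k_i}$ all of whose edges have color $i$; it is symmetric in its arguments. $R_r(k)=R(k,\dots,k)$ with $r$ arguments equal to $k$. It is known that for each $k$ the limit $\lim_{r\to\infty} R_r(k)^{1/r}$ exists (possibly infinite). *)

theory Defs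
  imports Complex_Main
begin

definition ramsey_arrows :: "nat \<Rightarrow> nat list \<Rightarrow> bool" where
  "ramsey_arrows n ks \<longleftrightarrow>
     (\<forall>c :: nat set \<Rightarrow> nat.
        (\<forall>x<n. \<forall>y<n. x \<noteq> y \<longrightarrow> c {x, y} < length ks) \<longrightarrow>
        (\<exists>i<length ks. \<exists>S. S \<subseteq> {..<n} \<and> card S = ks ! i \<and>
            (\<forall>x\<in>S. \<forall>y\<in>S. x \<noteq> y \<longrightarrow> c {x, y} = i)))"

definition ramsey :: "nat list \<Rightarrow> nat" where
  "ramsey ks = (LEAST n. ramsey_arrows n ks)"

definition diagonal_conjecture :: bool where
  "diagonal_conjecture \<longleftrightarrow>
     (\<forall>s t ks. 3 \<le> s \<longrightarrow> s \<le> t \<longrightarrow> (\<forall>k\<in>set ks. 2 \<le> k) \<longrightarrow>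
        ramsey ((s - 1) # (t + 1) # ks) \<le> ramsey (s # t # ks))"

end

(* Under the Diagonal Conjecture a clique of size k can be traded for k - 2 triangles:
   R(k+1, ks) = R(2, k+1, ks) <= R(3, k, ks), and iterating gives R_r(k) <= R_((k-2)r)(3).
   Hence R_r(k)^(1/r) <= (R_((k-2)r)(3)^(1/((k-2)r)))^(k-2) stays bounded. Boundedness already
   forces convergence: blowing up every vertex of a bad colouring for A into a bad colouring
   for B shows that R_r(k) - 1 is supermultiplicative in r, so Fekete's lemma applies to
   ln (R_r(k) - 1). *)
theory Submission
  imports Defs "HOL-Library.Ramsey" "HOL-Combinatorics.Permutations"
begin

lemma ramsey_arrows_iff_partn_lst: "ramsey_arrows n ks \<longleftrightarrow> partn_lst {..<n} ks 2"
proof -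
  have valid: "c \<in> nsets {..<n} 2 \<rightarrow> {..<length ks} \<longleftrightarrow>
      (\<forall>x<n. \<forall>y<n. x \<noteq> y \<longrightarrow> c {x, y} < length ks)" for c :: "nat set \<Rightarrow> nat"
    by (auto simp: nsets_2_eq)
  have mono: "(\<exists>H \<in> nsets {..<n} (ks ! i). c ` nsets H 2 \<subseteq> {i}) \<longleftrightarrow>
      (\<exists>S. S \<subseteq> {..<n} \<and> card S = ks ! i \<and> (\<forall>x\<in>S. \<forall>y\<in>S. x \<noteq> y \<longrightarrow> c {x, y} = i))"
    for c :: "nat set \<Rightarrow> nat" and i
  proof
    assume "\<exists>H \<in> nsets {..<n} (ks ! i). c ` nsets H 2 \<subseteq> {i}"
    then obtain H where "H \<subseteq> {..<n}" "card H = ks ! i" "c ` nsets H 2 \<subseteq> {i}"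
      by (auto simp: nsets_def)
    then show "\<exists>S. S \<subseteq> {..<n} \<and> card S = ks ! i \<and> (\<forall>x\<in>S. \<forall>y\<in>S. x \<noteq> y \<longrightarrow> c {x, y} = i)"
      by (intro exI[of _ H]) (auto simp: image_subset_iff)
  next
    assume "\<exists>S. S \<subseteq> {..<n} \<and> card S = ks ! i \<and> (\<forall>x\<in>S. \<forall>y\<in>S. x \<noteq> y \<longrightarrow> c {x, y} = i)"
    then obtain S where "S \<subseteq> {..<n}" "card S = ks ! i" "\<forall>x\<in>S. \<forall>y\<in>S. x \<noteq> y \<longrightarrow> c {x, y} = i"
      by blast
    moreover from this(1) have "finite S"
      by (rule finite_subset) simp
    ultimately show "\<exists>H \<in> nsets {..<n} (ks ! i). c ` nsets H 2 \<subseteq> {i}"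
      unfolding nsets_2_eq by (intro bexI[of _ S]) (auto simp: nsets_def)
  qed
  show ?thesis
    unfolding ramsey_arrows_def partn_lst_def monochromatic_def Ball_def valid mono ..
qed

lemma ramsey_arrows_ramsey: "ramsey_arrows (ramsey ks) ks"
  unfolding ramsey_def ramsey_arrows_iff_partn_lst using ramsey_full by (rule LeastI_ex)

lemma ramsey_arrows_iff_ramsey_le: "ramsey_arrows n ks \<longleftrightarrow> ramsey ks \<le> n"
proof
  assume "ramsey_arrows n ks"
  then show "ramsey ks \<le> n"
    unfolding ramsey_def by (rule Least_le)
next
  assume "ramsey ks \<le> n"
  with ramsey_arrows_ramsey show "ramsey_arrows n ks"
    unfolding ramsey_arrows_iff_partn_lst by (rule partn_lst_greater_resource)
qed

lemma ramsey_cong: "(\<And>n. ramsey_arrows n xs \<longleftrightarrow> ramsey_arrows n ys) \<Longrightarrow> ramsey xs = ramsey ys"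
  unfolding ramsey_def by simp

lemma ramsey_arrows_mset_eq:
  assumes "mset xs = mset ys" and xs: "ramsey_arrows n xs"
  shows "ramsey_arrows n ys"
  unfolding ramsey_arrows_def
proof (intro allI impI)
  obtain p where p: "p permutes {..<length ys}" "permute_list p ys = xs"
    using mset_eq_permutation[OF assms(1)] .
  have len: "length xs = length ys"
    using p(2) by auto
  fix c :: "nat set \<Rightarrow> nat"
  assume c: "\<forall>x<n. \<forall>y<n. x \<noteq> y \<longrightarrow> c {x, y} < length ys"
  have "\<forall>x<n. \<forall>y<n. x \<noteq> y \<longrightarrow> inv p (c {x, y}) < length xs"
    using c permutes_in_image[OF permutes_inv[OF p(1)]] len by simp
  then obtain i S where iS: "i < length xs" "S \<subseteq> {..<n}" "card S = xs ! i"
      "\<forall>x\<in>S. \<forall>y\<in>S. x \<noteq> y \<longrightarrow> inv p (c {x, y}) = i"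
    using xs[unfolded ramsey_arrows_def, rule_format, of "inv p \<circ> c"] by auto
  have "\<forall>x\<in>S. \<forall>y\<in>S. x \<noteq> y \<longrightarrow> c {x, y} = p i"
    using iS(4) permutes_inverses(1)[OF p(1)] by metis
  moreover have "p i < length ys" "card S = ys ! p i"
    using iS(1,3) p len permutes_in_image[OF p(1)] permute_list_nth[OF p(1)] by auto
  ultimately show "\<exists>i<length ys. \<exists>S. S \<subseteq> {..<n} \<and> card S = ys ! i \<and>
      (\<forall>x\<in>S. \<forall>y\<in>S. x \<noteq> y \<longrightarrow> c {x, y} = i)"
    using iS(2) by blast
qed

lemma ramsey_mset_eq: "mset xs = mset ys \<Longrightarrow> ramsey xs = ramsey ys"
  by (rule ramsey_cong) (metis ramsey_arrows_mset_eq)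

lemma ramsey_arrows_Cons_2: "ramsey_arrows n (2 # ks) \<longleftrightarrow> ramsey_arrows n ks"
proof
  assume "ramsey_arrows n (2 # ks)"
  then show "ramsey_arrows n ks"
    unfolding ramsey_arrows_iff_partn_lst by (rule partn_lst_fewer_colours) simp
next
  assume ks: "ramsey_arrows n ks"
  show "ramsey_arrows n (2 # ks)"
    unfolding ramsey_arrows_def
  proof (intro allI impI)
    fix c :: "nat set \<Rightarrow> nat"
    assume c: "\<forall>x<n. \<forall>y<n. x \<noteq> y \<longrightarrow> c {x, y} < length (2 # ks)"
    show "\<exists>i<length (2 # ks). \<exists>S. S \<subseteq> {..<n} \<and> card S = (2 # ks) ! i \<and>
        (\<forall>x\<in>S. \<forall>y\<in>S. x \<noteq> y \<longrightarrow> c {x, y} = i)"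
    proof (cases "\<exists>x<n. \<exists>y<n. x \<noteq> y \<and> c {x, y} = 0")
      case True
      then obtain x y where xy: "x < n" "y < n" "x \<noteq> y" "c {x, y} = 0"
        by blast
      have "{u, v} = {x, y}" if "u \<in> {x, y}" "v \<in> {x, y}" "u \<noteq> v" for u v
        using that by blast
      with xy(4) have "\<forall>u\<in>{x, y}. \<forall>v\<in>{x, y}. u \<noteq> v \<longrightarrow> c {u, v} = 0"
        by metis
      with xy show ?thesis
        by (intro exI[of _ 0] conjI exI[of _ "{x, y}"]) auto
    next
      case False
      have "c {x, y} - 1 < length ks" if "x < n" "y < n" "x \<noteq> y" for x y
      proof -
        have "c {x, y} \<noteq> 0" "c {x, y} < Suc (length ks)"
          using False c that by auto
        then show ?thesis
          by linarith
      qed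
      then obtain i S where iS: "i < length ks" "S \<subseteq> {..<n}" "card S = ks ! i"
          "\<forall>x\<in>S. \<forall>y\<in>S. x \<noteq> y \<longrightarrow> c {x, y} - 1 = i"
        using ks[unfolded ramsey_arrows_def, rule_format, of "\<lambda>e. c e - 1"] by blast
      have "\<forall>x\<in>S. \<forall>y\<in>S. x \<noteq> y \<longrightarrow> c {x, y} = Suc i"
        using False iS(2,4) by fastforce
      with iS show ?thesis
        by (intro exI[of _ "Suc i"] conjI exI[of _ S]) auto
    qed
  qed
qed

lemma ramsey_Cons_2: "ramsey (2 # ks) = ramsey ks"
  by (rule ramsey_cong) (rule ramsey_arrows_Cons_2)

lemma ramsey_ge_2:
  assumes "\<forall>k\<in>set ks. 2 \<le> k"
  shows "2 \<le> ramsey ks"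
proof -
  have "\<not> partn_lst {..<1::nat} ks 2"
  proof
    assume "partn_lst {..<1::nat} ks 2"
    moreover have "nsets {..<1::nat} 2 = {}"
      by (simp add: nsets_eq_empty_iff)
    then have "(\<lambda>_. 0) \<in> nsets {..<1::nat} 2 \<rightarrow> {..<length ks}"
      by simp
    ultimately obtain i H where "i < length ks" "H \<in> nsets {..<1::nat} (ks ! i)"
      by (rule partn_lstE) simp
    then have "2 \<le> card H" "H \<subseteq> {..<1}"
      using assms by (auto simp: nsets_def)
    then show False
      using card_mono[OF finite_lessThan, of H 1] by simp
  qed
  then show ?thesis
    using ramsey_arrows_iff_ramsey_le[of 1 ks] unfolding ramsey_arrows_iff_partn_lst by linarith
qed

lemma monochromatic_image:
  assumes "\<And>x y. x \<in> S \<Longrightarrow> y \<in> S \<Longrightarrow> x \<noteq> y \<Longrightarrow> f x \<noteq> f y \<and> c {f x, f y} = i"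
  shows "card (f ` S) = card S" and "\<forall>u\<in>f ` S. \<forall>v\<in>f ` S. u \<noteq> v \<longrightarrow> c {u, v} = i"
proof -
  have "inj_on f S"
    using assms by (meson inj_onI)
  then show "card (f ` S) = card S"
    by (rule card_image)
  show "\<forall>u\<in>f ` S. \<forall>v\<in>f ` S. u \<noteq> v \<longrightarrow> c {u, v} = i"
    using assms by blast
qed

lemma ramsey_arrows_mult_append:
  assumes AB: "ramsey_arrows (n * m) (A @ B)" and A: "\<not> ramsey_arrows n A"
  shows "ramsey_arrows m B"
  unfolding ramsey_arrows_def
proof (intro allI impI)
  obtain c1 :: "nat set \<Rightarrow> nat" where c1: "\<forall>x<n. \<forall>y<n. x \<noteq> y \<longrightarrow> c1 {x, y} < length A"
    and no_clique: "\<not> (\<exists>i<length A. \<exists>S. S \<subseteq> {..<n} \<and> card S = A ! i \<and>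
        (\<forall>x\<in>S. \<forall>y\<in>S. x \<noteq> y \<longrightarrow> c1 {x, y} = i))"
    using A unfolding ramsey_arrows_def by blast
  fix c2 :: "nat set \<Rightarrow> nat"
  assume c2: "\<forall>x<m. \<forall>y<m. x \<noteq> y \<longrightarrow> c2 {x, y} < length B"
  \<comment> \<open>Vertex v of K_(n m) is the pair (v div m, v mod m): an edge between two blocks gets
    the c1-colour of the blocks, an edge inside a block its c2-colour shifted past the colours of A.\<close>
  define q where "q v = v div m" for v :: nat
  define r where "r v = v mod m" for v :: nat
  define c where "c e = (if card (q ` e) = 1 then length A + c2 (r ` e) else c1 (q ` e))" for e
  have c_same: "c {x, y} = length A + c2 {r x, r y}" if "q x = q y" for x y
    using that by (simp add: c_def)
  have c_diff: "c {x, y} = c1 {q x, q y}" if "q x \<noteq> q y" for x y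
    using that by (simp add: c_def)
  have qr_inj: "x = y" if "q x = q y" "r x = r y" for x y
    using that div_mult_mod_eq unfolding q_def r_def by metis
  have q_less: "q x < n" if "x < n * m" for x
    using that by (simp add: q_def less_mult_imp_div_less)
  have r_less: "r x < m" if "x < n * m" for x
    using that unfolding r_def by (metis mod_less_divisor mult_0_right not_gr0 not_less0)
  have "\<forall>x<n * m. \<forall>y<n * m. x \<noteq> y \<longrightarrow> c {x, y} < length (A @ B)"
    using c1 c2 c_same c_diff qr_inj q_less r_less by (metis add_less_cancel_left length_append trans_less_add1)
  then obtain i S where iS: "i < length (A @ B)" "S \<subseteq> {..<n * m}" "card S = (A @ B) ! i"
      "\<forall>x\<in>S. \<forall>y\<in>S. x \<noteq> y \<longrightarrow> c {x, y} = i"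
    using AB[unfolded ramsey_arrows_def, rule_format, of c] by blast
  show "\<exists>j<length B. \<exists>S. S \<subseteq> {..<m} \<and> card S = B ! j \<and>
      (\<forall>x\<in>S. \<forall>y\<in>S. x \<noteq> y \<longrightarrow> c2 {x, y} = j)"
  proof (cases "i < length A")
    case True
    have "q x \<noteq> q y \<and> c1 {q x, q y} = i" if "x \<in> S" "y \<in> S" "x \<noteq> y" for x y
      using iS(4) that c_same c_diff True by (metis not_add_less1)
    note clique = monochromatic_image[of S q c1 i, OF this]
    have "q ` S \<subseteq> {..<n}"
      using iS(2) q_less by auto
    with clique iS(3) True no_clique show ?thesis
      by (metis nth_append)
  next
    case False
    have "r x \<noteq> r y \<and> c2 {r x, r y} = i - length A" if "x \<in> S" "y \<in> S" "x \<noteq> y" for x y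
      using iS(2,4) that c_same c_diff False c1 q_less qr_inj by (metis add_diff_cancel_left' lessThan_iff subsetD)
    note clique = monochromatic_image[of S r c2 "i - length A", OF this]
    have "r ` S \<subseteq> {..<m}"
      using iS(2) r_less by auto
    with clique iS(1,3) False show ?thesis
      by (metis diff_less_mono length_append add_diff_cancel_left' nth_append not_less)
  qed
qed

lemma ramsey_append_ge: "(ramsey A - 1) * (ramsey B - 1) \<le> ramsey (A @ B) - 1"
proof (cases "ramsey A = 0 \<or> ramsey B = 0")
  case False
  then have "\<not> ramsey_arrows (ramsey A - 1) A" "\<not> ramsey_arrows (ramsey B - 1) B"
    unfolding ramsey_arrows_iff_ramsey_le by linarith+
  then have "\<not> ramsey_arrows ((ramsey A - 1) * (ramsey B - 1)) (A @ B)"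
    using ramsey_arrows_mult_append by blast
  then show ?thesis
    by (simp add: ramsey_arrows_iff_ramsey_le)
qed auto \<comment> \<open>a zero Ramsey number makes the left side 0 by truncated subtraction\<close>

lemma ramsey_Cons_le_replicate_3:
  assumes dc: diagonal_conjecture and "3 \<le> k" "\<forall>x\<in>set ks. 2 \<le> x"
  shows "ramsey (k # ks) \<le> ramsey (replicate (k - 2) 3 @ ks)"
  using assms(2,3)
proof (induction k arbitrary: ks rule: nat_induct_at_least)
  case base
  then show ?case
    by simp
next
  case (Suc k)
  have "ramsey (Suc k # ks) = ramsey ((3 - 1) # (k + 1) # ks)"
    using ramsey_Cons_2 by simp
  also have "\<dots> \<le> ramsey (3 # k # ks)"
    using dc[unfolded diagonal_conjecture_def, rule_format, of 3 k ks] Suc by simp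
  also have "\<dots> = ramsey (k # 3 # ks)"
    by (rule ramsey_mset_eq) simp
  also have "\<dots> \<le> ramsey (replicate (k - 2) 3 @ 3 # ks)"
    using Suc by simp
  also have "replicate (k - 2) 3 @ 3 # ks = replicate (Suc k - 2) 3 @ ks"
    using Suc(1) by (simp add: replicate_app_Cons_same Suc_diff_le flip: replicate_Suc)
  finally show ?case .
qed

lemma ramsey_replicate_le_replicate_3:
  assumes dc: diagonal_conjecture and k: "3 \<le> k" and "\<forall>x\<in>set ks. 2 \<le> x"
  shows "ramsey (replicate r k @ ks) \<le> ramsey (replicate (r * (k - 2)) 3 @ ks)"
  using assms(3)
proof (induction r arbitrary: ks)
  case (Suc r)
  have "\<forall>x\<in>set (replicate r k @ ks). 2 \<le> x"
    using Suc.prems k by auto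
  then have "ramsey (replicate (Suc r) k @ ks) \<le> ramsey (replicate (k - 2) 3 @ replicate r k @ ks)"
    using ramsey_Cons_le_replicate_3[OF dc k] by simp
  also have "\<dots> = ramsey (replicate r k @ replicate (k - 2) 3 @ ks)"
    by (rule ramsey_mset_eq) simp
  also have "\<dots> \<le> ramsey (replicate (r * (k - 2)) 3 @ replicate (k - 2) 3 @ ks)"
    using Suc.prems by (intro Suc.IH) auto
  also have "replicate (r * (k - 2)) 3 @ replicate (k - 2) 3 @ ks = replicate (Suc r * (k - 2)) 3 @ ks"
    by (simp add: replicate_add[symmetric] add.commute)
  finally show ?case .
qed simp

lemma ramsey_root_le_ramsey_3_root:
  assumes dc: diagonal_conjecture and k: "3 \<le> k" and "0 < r"
  shows "real (ramsey (replicate r k)) powr (1 / real r)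
    \<le> (real (ramsey (replicate (r * (k - 2)) 3)) powr (1 / real (r * (k - 2)))) ^ (k - 2)"
proof -
  define R3 where "R3 = real (ramsey (replicate (r * (k - 2)) 3))"
  have "0 < R3"
    using ramsey_ge_2[of "replicate (r * (k - 2)) 3"] by (simp add: R3_def)
  have "real (ramsey (replicate r k)) \<le> R3"
    using ramsey_replicate_le_replicate_3[OF dc k, of "[]" r] by (simp add: R3_def)
  then have "real (ramsey (replicate r k)) powr (1 / real r) \<le> R3 powr (1 / real r)"
    by (simp add: powr_mono2)
  also have "\<dots> = (R3 powr (1 / real (r * (k - 2)))) powr real (k - 2)"
    using assms by (simp add: powr_powr)
  also have "\<dots> = (R3 powr (1 / real (r * (k - 2)))) ^ (k - 2)"
    using \<open>0 < R3\<close> by (simp add: powr_realpow)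
  finally show ?thesis
    unfolding R3_def .
qed

lemma bdd_above_ramsey_root:
  assumes dc: diagonal_conjecture and k: "3 \<le> k"
    and "bdd_above (range (\<lambda>r. real (ramsey (replicate r 3)) powr (1 / real r)))"
  shows "bdd_above (range (\<lambda>r. real (ramsey (replicate r k)) powr (1 / real r)))"
proof -
  obtain B where B: "\<And>m. real (ramsey (replicate m 3)) powr (1 / real m) \<le> B"
    using assms(3) by (auto simp: bdd_above_def)
  have "real (ramsey (replicate r k)) powr (1 / real r) \<le> max 1 (B ^ (k - 2))" for r
  proof (cases "r = 0")
    case True
    then show ?thesis
      using ramsey_ge_2[of "[]"] by simp
  next
    case False
    have "real (ramsey (replicate r k)) powr (1 / real r)
        \<le> (real (ramsey (replicate (r * (k - 2)) 3)) powr (1 / real (r * (k - 2)))) ^ (k - 2)"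
      using False by (intro ramsey_root_le_ramsey_3_root[OF dc k]) simp
    also have "\<dots> \<le> B ^ (k - 2)"
      by (intro power_mono B) simp
    finally show ?thesis
      by simp
  qed
  then show ?thesis
    by (rule bdd_aboveI2)
qed

lemma superadditive_mult_le:
  fixes a :: "nat \<Rightarrow> real"
  assumes superadd: "\<And>m n. a m + a n \<le> a (m + n)" and nonneg: "\<And>n. 0 \<le> a n"
  shows "real q * a m \<le> a (q * m)"
proof (induction q)
  case 0
  then show ?case
    using nonneg by simp
next
  case (Suc q)
  have "real (Suc q) * a m = a m + real q * a m"
    by (simp add: algebra_simps)
  also have "\<dots> \<le> a m + a (q * m)"
    using Suc by simp
  also have "\<dots> \<le> a (Suc q * m)"
    using superadd by simp
  finally show ?case .
qed

lemma superadditive_ratio_ge: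
  fixes a :: "nat \<Rightarrow> real"
  assumes superadd: "\<And>m n. a m + a n \<le> a (m + n)" and nonneg: "\<And>n. 0 \<le> a n"
    and "0 < m" "0 < n"
  shows "(1 - real m / real n) * (a m / real m) \<le> a n / real n"
proof -
  define q where "q = n div m"
  have "real n - real m \<le> real q * real m"
  proof -
    have "n < (q + 1) * m"
      using \<open>0 < m\<close> unfolding q_def by (metis add.commute dividend_less_div_times mult_Suc plus_1_eq_Suc)
    then show ?thesis
      by (simp add: algebra_simps flip: of_nat_mult of_nat_add)
  qed
  have "real q * a m \<le> a n"
  proof -
    have "real q * a m \<le> a (q * m)"
      using superadd nonneg by (rule superadditive_mult_le)
    also have "\<dots> \<le> a (q * m) + a (n mod m)"
      using nonneg by simp
    also have "\<dots> \<le> a n"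
      using superadd[of "q * m" "n mod m"] by (simp add: q_def)
    finally show ?thesis .
  qed
  have "(1 - real m / real n) * (a m / real m) = (real n - real m) * a m / (real n * real m)"
    using assms(3,4) by (simp add: field_simps)
  also have "\<dots> \<le> (real q * real m) * a m / (real n * real m)"
    using \<open>real n - real m \<le> real q * real m\<close> nonneg[of m]
    by (intro divide_right_mono mult_right_mono) auto
  also have "\<dots> = real q * a m / real n"
    using assms(3) by simp
  also have "\<dots> \<le> a n / real n"
    using \<open>real q * a m \<le> a n\<close> by (simp add: divide_right_mono)
  finally show ?thesis .
qed

lemma fekete_superadditive:
  fixes a :: "nat \<Rightarrow> real"
  assumes superadd: "\<And>m n. a m + a n \<le> a (m + n)" and nonneg: "\<And>n. 0 \<le> a n"
    and bdd: "bdd_above (range (\<lambda>n. a n / real n))"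
  shows "(\<lambda>n. a n / real n) \<longlonglongrightarrow> (SUP n. a n / real n)"
proof (rule order_tendstoI)
  fix y
  assume "y < (SUP n. a n / real n)"
  then obtain m where m: "y < a m / real m"
    using less_cSUP_iff[OF _ bdd] by blast
  show "\<forall>\<^sub>F n in sequentially. y < a n / real n"
  proof (cases "m = 0")
    case True
    then show ?thesis
      using m nonneg by (intro always_eventually) (simp add: less_le_trans)
  next
    case False
    have "(\<lambda>n. (1 - real m / real n) * (a m / real m)) \<longlonglongrightarrow> (1 - 0) * (a m / real m)"
      by (intro tendsto_intros tendsto_divide_0[OF tendsto_const] filterlim_real_sequentially)
    then have "\<forall>\<^sub>F n in sequentially. y < (1 - real m / real n) * (a m / real m)"
      using m by (intro order_tendstoD(1)) auto
    moreover have "\<forall>\<^sub>F n in sequentially. (1 - real m / real n) * (a m / real m) \<le> a n / real n"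
      using eventually_gt_at_top[of 0]
      by eventually_elim (use False superadd nonneg superadditive_ratio_ge in auto)
    ultimately show ?thesis
      by eventually_elim auto
  qed
next
  fix y
  assume "(SUP n. a n / real n) < y"
  then show "\<forall>\<^sub>F n in sequentially. a n / real n < y"
    using cSUP_upper[OF UNIV_I bdd] by (intro always_eventually) (meson le_less_trans)
qed

lemma convergent_root_supermultiplicative:
  fixes y :: "nat \<Rightarrow> real"
  assumes ge_1: "\<And>n. 1 \<le> y n" and supermult: "\<And>m n. y m * y n \<le> y (m + n)"
    and bdd: "bdd_above (range (\<lambda>n. y n powr (1 / real n)))"
  shows "convergent (\<lambda>n. y n powr (1 / real n))"
proof -
  define a where "a n = ln (y n)" for n
  have pos: "0 < y n" for n
    using ge_1[of n] by simp
  have "a m + a n \<le> a (m + n)" for m n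
  proof -
    have "a m + a n = ln (y m * y n)"
      using pos[of m] pos[of n] by (simp add: a_def ln_mult)
    also have "\<dots> \<le> a (m + n)"
      using supermult[of m n] pos by (simp add: a_def)
    finally show ?thesis .
  qed
  moreover have "0 \<le> a n" for n
    using ge_1[of n] by (simp add: a_def)
  moreover have "bdd_above (range (\<lambda>n. a n / real n))"
  proof -
    obtain B where B: "\<And>n. y n powr (1 / real n) \<le> B"
      using bdd by (auto simp: bdd_above_def)
    have "a n / real n = ln (y n powr (1 / real n))" for n
      by (simp add: a_def)
    also have "\<dots> n \<le> ln B" for n
      using B[of n] pos[of n] by (intro ln_mono) auto
    finally show ?thesis
      by (rule bdd_aboveI2)
  qed
  ultimately have "(\<lambda>n. a n / real n) \<longlonglongrightarrow> (SUP n. a n / real n)"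
    by (rule fekete_superadditive)
  then have "(\<lambda>n. exp (a n / real n)) \<longlonglongrightarrow> exp (SUP n. a n / real n)"
    by (rule tendsto_exp)
  moreover have "exp (a n / real n) = y n powr (1 / real n)" for n
    using pos[of n] by (simp add: a_def powr_def)
  ultimately show ?thesis
    by (auto intro: convergentI)
qed

lemma convergent_root_add_1:
  fixes y :: "nat \<Rightarrow> real"
  assumes ge_1: "\<And>n. 1 \<le> y n" and conv: "convergent (\<lambda>n. y n powr (1 / real n))"
  shows "convergent (\<lambda>n. (y n + 1) powr (1 / real n))"
proof -
  define z where "z n = ((y n + 1) / y n) powr (1 / real n)" for n
  have "z \<longlonglongrightarrow> 1"
  proof (rule tendsto_sandwich)
    have ratio: "1 \<le> (y n + 1) / y n" "(y n + 1) / y n \<le> 2" for n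
      using ge_1[of n] by (auto simp: field_simps)
    show "\<forall>\<^sub>F n in sequentially. 1 \<le> z n"
      using ratio by (simp add: z_def ge_one_powr_ge_zero)
    show "\<forall>\<^sub>F n in sequentially. z n \<le> 2 powr (1 / real n)"
      unfolding z_def using ratio by (intro always_eventually allI powr_mono2) (auto intro: order_trans[OF zero_le_one])
    have "(\<lambda>n. 2 powr (1 / real n)) \<longlonglongrightarrow> 2 powr 0"
      by (intro tendsto_intros lim_inverse_n') simp
    then show "(\<lambda>n. 2 powr (1 / real n)) \<longlonglongrightarrow> 1"
      by simp
  qed simp
  moreover have "(y n + 1) powr (1 / real n) = y n powr (1 / real n) * z n" for n
    using ge_1[of n] by (simp add: z_def powr_divide)
  ultimately show ?thesis
    using conv by (auto simp: convergent_def dest: tendsto_mult)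
qed

lemma convergent_ramsey_root:
  assumes "2 \<le> k" and bdd: "bdd_above (range (\<lambda>r. real (ramsey (replicate r k)) powr (1 / real r)))"
  shows "convergent (\<lambda>r. real (ramsey (replicate r k)) powr (1 / real r))"
proof -
  define y where "y r = real (ramsey (replicate r k)) - 1" for r
  have ramsey_ge: "2 \<le> ramsey (replicate r k)" for r
    using ramsey_ge_2[of "replicate r k"] assms(1) by simp
  then have ge_1: "1 \<le> y r" for r
    by (simp add: y_def)
  have "y m * y n \<le> y (m + n)" for m n
  proof -
    have "(ramsey (replicate m k) - 1) * (ramsey (replicate n k) - 1) \<le> ramsey (replicate (m + n) k) - 1"
      using ramsey_append_ge[of "replicate m k" "replicate n k"] by (simp add: replicate_add)
    then have "real ((ramsey (replicate m k) - 1) * (ramsey (replicate n k) - 1))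
        \<le> real (ramsey (replicate (m + n) k) - 1)"
      by (simp only: of_nat_le_iff)
    then show ?thesis
      using ramsey_ge[of m] ramsey_ge[of n] ramsey_ge[of "m + n"] by (simp add: y_def of_nat_diff)
  qed
  moreover have "bdd_above (range (\<lambda>r. y r powr (1 / real r)))"
  proof -
    obtain B where B: "\<And>r. real (ramsey (replicate r k)) powr (1 / real r) \<le> B"
      using bdd by (auto simp: bdd_above_def)
    have "y r powr (1 / real r) \<le> B" for r
      by (rule order_trans[OF powr_mono2 B]) (use ge_1[of r] in \<open>auto simp: y_def\<close>)
    then show ?thesis
      by (rule bdd_aboveI2)
  qed
  ultimately have "convergent (\<lambda>r. y r powr (1 / real r))"
    using ge_1 by (intro convergent_root_supermultiplicative)
  then show ?thesis
    using convergent_root_add_1[OF ge_1] by (simp add: y_def)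
qed

theorem theorem2:
  assumes "diagonal_conjecture"
    and "convergent (\<lambda>r. real (ramsey (replicate r 3)) powr (1 / real r))"
  shows "\<forall>k\<ge>3. convergent (\<lambda>r. real (ramsey (replicate r k)) powr (1 / real r))"
proof (intro allI impI)
  fix k :: nat
  assume "3 \<le> k"
  have "bdd_above (range (\<lambda>r. real (ramsey (replicate r 3)) powr (1 / real r)))"
    using assms(2) by (intro Bseq_bdd_above convergent_imp_Bseq)
  with assms(1) \<open>3 \<le> k\<close> have "bdd_above (range (\<lambda>r. real (ramsey (replicate r k)) powr (1 / real r)))"
    by (rule bdd_above_ramsey_root)
  with \<open>3 \<le> k\<close> show "convergent (\<lambda>r. real (ramsey (replicate r k)) powr (1 / real r))"
    by (intro convergent_ramsey_root) simp_all
qed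

end
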